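(* Let $G$ be a graph on $d+2$ vertices and $k > 1$. Then $G$ is representable in $\mathbb{R}^d$ with ratio $k$ if and only if both of the following hold: (1) $w^T B_G(k) w \geq 0$ for all $w \in \mathbf{1}^{\perp}$; (2) there exists a nonzero vector $w \in \mathbf{1}^{\perp}$ and a real number $\gamma$ such that $B_G(k) w = \gamma \mathbf{1}$.
   Context: Graphs are finite and simple with vertices labeled $1,\dots,d+2$. A finite set $S \subset \mathbb{R}^d$ is a 2-distance set if $\{\|p-q\| : p,q \in S, p\neq q\}$ has exactly two elements $\alpha_1 > \alpha_2$; its distance ratio is $k=\alpha_1/\alpha_2$. Its associated graph has vertex set $S$ with $p,q$ adjacent iff $\|p-q\|=\alpha_1$. $G$ is representable in $\mathbb{R}^d$ with ratio $k$ if some 2-distance set in $\mathbb{R}^d$ with distance ratio $k$ has associated graph $G$. $B_G(k)$ is the $(d+2)\times(d+2)$ matrix with entries $b_{ii}=0$, $b_{ij} = -1$ if $i\neq j$ and $\{i,j\}$ is not an edge, and $b_{ij} = -k^2$ if $\{i,j\}$ is an edge. $\mathbf{1}$ is the all-ones vector and $\mathbf{1}^{\perp}$ its orthogonal complement. *)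

theory Defs
  imports "HOL-Analysis.Analysis"
begin

definition dists :: "'a::metric_space set \<Rightarrow> real set" where
  "dists S = {dist p q | p q. p \<in> S \<and> q \<in> S \<and> p \<noteq> q}"

definition two_distance_set :: "'a::metric_space set \<Rightarrow> bool" where
  "two_distance_set S \<longleftrightarrow> finite S \<and> card (dists S) = 2"

definition distance_ratio :: "'a::metric_space set \<Rightarrow> real" where
  "distance_ratio S = Max (dists S) / Min (dists S)"

definition assoc_adj :: "'a::metric_space set \<Rightarrow> 'a \<Rightarrow> 'a \<Rightarrow> bool" where
  "assoc_adj S p q \<longleftrightarrow> p \<in> S \<and> q \<in> S \<and> p \<noteq> q \<and> dist p q = Max (dists S)"

text \<open>The graph E (on vertex type 'v) is representable in R^d, d = CARD('n), with ratio k: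
  some 2-distance set in R^d with ratio k has associated graph isomorphic to E.\<close>
definition representable :: "('v \<Rightarrow> 'v \<Rightarrow> bool) \<Rightarrow> real \<Rightarrow> 'n::finite itself \<Rightarrow> bool" where
  "representable E k _ \<longleftrightarrow>
     (\<exists>S :: (real^'n) set. two_distance_set S \<and> distance_ratio S = k \<and>
        (\<exists>f. bij_betw f UNIV S \<and> (\<forall>i j. E i j \<longleftrightarrow> assoc_adj S (f i) (f j))))"

definition B_G :: "('v::finite \<Rightarrow> 'v \<Rightarrow> bool) \<Rightarrow> real \<Rightarrow> real^'v^'v" where
  "B_G E k = (\<chi> i j. if i = j then 0 else if E i j then - (k^2) else -1)"

definition ones :: "real^'v::finite" where
  "ones = (\<chi> i. 1)"

end

theory Submission
  imports Defs
begin

(*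
  Scale a representation so that its shorter distance is 1, and let D be the
  matrix of squared distances of its points x_1, ..., x_(d+2) in R^d; then
  B_G(k) = -D. For w in 1^perp one has w^T D w = -2 |sum_i w_i x_i|^2, which
  gives (1). The d + 2 points are affinely dependent: sum_i w_i x_i = 0 for some
  nonzero w in 1^perp, and for such w the vector D w is a multiple of 1, which
  gives (2).

  Conversely, let P be the orthogonal projection onto 1^perp. By (1) the matrix
  M = 1/2 P B P is positive semidefinite, and by (2) its kernel contains the
  independent vectors 1 and w, so M has rank at most d. Hence M is the Gram
  matrix of d + 2 points of R^d, and their squared distances are -B_ij. Both
  distances 1 and k occur, because a matrix c (J - I) with c nonzero maps no
  nonzero vector of 1^perp to a multiple of 1.
*)

lemma inner_ones: "w \<bullet> (ones :: real^'v::finite) = (\<Sum>i\<in>UNIV. w $ i)"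
  by (simp add: ones_def inner_vec_def)

lemma ones_inner_ones: "ones \<bullet> (ones :: real^'v::finite) = real CARD('v)"
  unfolding inner_ones by (simp add: ones_def)

lemma matrix_vector_mult_uminus_left: "(- A) *v x = - (A *v x :: real^'m::finite)"
  by (simp add: vec_eq_iff matrix_vector_mult_def sum_negf)

section \<open>Squared distance matrices\<close>

definition sq_dist_matrix :: "('v::finite \<Rightarrow> 'a::real_inner) \<Rightarrow> real^'v^'v" where
  "sq_dist_matrix x = (\<chi> i j. (dist (x i) (x j))\<^sup>2)"

lemma sq_dist_matrix_mult:
  "(sq_dist_matrix x *v w) $ i =
     (\<Sum>j\<in>UNIV. w $ j) * (x i \<bullet> x i) - 2 * (x i \<bullet> (\<Sum>j\<in>UNIV. w $ j *\<^sub>R x j))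
       + (\<Sum>j\<in>UNIV. w $ j * (x j \<bullet> x j))"
proof -
  have sq_dist: "(dist (x i) (x j))\<^sup>2 = x i \<bullet> x i - 2 * (x i \<bullet> x j) + x j \<bullet> x j" for j
    by (simp add: dist_norm power2_norm_eq_inner inner_diff_left inner_diff_right inner_commute)
  have "(sq_dist_matrix x *v w) $ i =
      (\<Sum>j\<in>UNIV. w $ j * (x i \<bullet> x i) - 2 * (w $ j * (x i \<bullet> x j)) + w $ j * (x j \<bullet> x j))"
    by (simp add: sq_dist_matrix_def matrix_vector_mult_def sq_dist algebra_simps)
  then show ?thesis
    by (simp add: sum.distrib sum_subtractf inner_sum_right sum_distrib_left sum_distrib_right)
qed

lemma sq_dist_matrix_quadratic_form:
  assumes "w \<bullet> ones = 0"
  shows "w \<bullet> (sq_dist_matrix x *v w) = - 2 * (norm (\<Sum>j\<in>UNIV. w $ j *\<^sub>R x j))\<^sup>2"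
proof -
  let ?y = "\<Sum>j\<in>UNIV. w $ j *\<^sub>R x j" and ?K = "\<Sum>j\<in>UNIV. w $ j * (x j \<bullet> x j)"
  have sum0: "(\<Sum>j\<in>UNIV. w $ j) = 0"
    using assms by (simp add: inner_ones)
  have "w \<bullet> (sq_dist_matrix x *v w) = (\<Sum>i\<in>UNIV. w $ i * ?K - 2 * (w $ i * (x i \<bullet> ?y)))"
    by (simp add: inner_vec_def sq_dist_matrix_mult sum0 algebra_simps)
  also have "\<dots> = - 2 * (?y \<bullet> ?y)"
    by (simp add: sum_subtractf sum_distrib_right[symmetric] sum_distrib_left[symmetric] sum0 inner_sum_left)
  finally show ?thesis
    by (simp add: power2_norm_eq_inner)
qed

lemma sq_dist_matrix_mult_affine_dependence:
  assumes "w \<bullet> ones = 0" and "(\<Sum>j\<in>UNIV. w $ j *\<^sub>R x j) = 0"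
  shows "sq_dist_matrix x *v w = (\<Sum>j\<in>UNIV. w $ j * (x j \<bullet> x j)) *\<^sub>R ones"
proof -
  have "(\<Sum>j\<in>UNIV. w $ j) = 0"
    using assms(1) by (simp add: inner_ones)
  then show ?thesis
    by (simp add: vec_eq_iff sq_dist_matrix_mult assms(2) ones_def)
qed

lemma ex_affine_dependence:
  fixes x :: "'v::finite \<Rightarrow> 'a::euclidean_space"
  assumes "DIM('a) + 2 \<le> CARD('v)"
  shows "\<exists>w::real^'v. w \<noteq> 0 \<and> w \<bullet> ones = 0 \<and> (\<Sum>i\<in>UNIV. w $ i *\<^sub>R x i) = 0"
proof (cases "inj x")
  case True
  then have "affine_dependent (range x)"
    using assms by (intro affine_dependent_biggerset) (simp_all add: card_image)
  then obtain U where U: "sum U (range x) = 0" "\<exists>v\<in>range x. U v \<noteq> 0" "(\<Sum>v\<in>range x. U v *\<^sub>R v) = 0"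
    by (auto simp: affine_dependent_explicit_finite)
  define w :: "real^'v" where "w = (\<chi> i. U (x i))"
  have "w \<noteq> 0" "w \<bullet> ones = 0" "(\<Sum>i\<in>UNIV. w $ i *\<^sub>R x i) = 0"
    using U by (auto simp: w_def vec_eq_iff inner_ones sum.reindex[OF True])
  then show ?thesis
    by blast
next
  case False
  then obtain i j where "i \<noteq> j" "x i = x j"
    by (auto simp: inj_def)
  moreover have "(\<Sum>l\<in>UNIV. (axis i 1 - axis j 1 :: real^'v) $ l *\<^sub>R x l) = x i - x j"
    by (simp add: scaleR_diff_left sum_subtractf axis_def if_distrib[of "\<lambda>c. c *\<^sub>R _"] cong: if_cong)
  ultimately show ?thesis
    by (intro exI[of _ "axis i 1 - axis j 1"]) (simp add: inner_diff_left inner_axis' ones_def axis_eq_axis)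
qed

lemma quadratic_form_neg_sq_dist_matrix_nonneg:
  "w \<bullet> ones = 0 \<Longrightarrow> 0 \<le> w \<bullet> (- sq_dist_matrix x *v w)"
  by (simp add: matrix_vector_mult_uminus_left sq_dist_matrix_quadratic_form)

lemma ex_orth_ones_neg_sq_dist_matrix_mult_eq_const:
  fixes x :: "'v::finite \<Rightarrow> 'a::euclidean_space"
  assumes "DIM('a) + 2 \<le> CARD('v)"
  shows "\<exists>(w::real^'v) \<gamma>. w \<noteq> 0 \<and> w \<bullet> ones = 0 \<and> - sq_dist_matrix x *v w = \<gamma> *\<^sub>R ones"
proof -
  obtain w :: "real^'v" where w: "w \<noteq> 0" "w \<bullet> ones = 0" "(\<Sum>i\<in>UNIV. w $ i *\<^sub>R x i) = 0"
    using ex_affine_dependence[OF assms] by blast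
  then have "- sq_dist_matrix x *v w = (- (\<Sum>j\<in>UNIV. w $ j * (x j \<bullet> x j))) *\<^sub>R ones"
    by (simp add: matrix_vector_mult_uminus_left sq_dist_matrix_mult_affine_dependence)
  with w show ?thesis
    by blast
qed

section \<open>Positive semidefinite matrices\<close>

definition positive_semidefinite :: "real^'n::finite^'n \<Rightarrow> bool" where
  "positive_semidefinite M \<longleftrightarrow> transpose M = M \<and> (\<forall>u. 0 \<le> u \<bullet> (M *v u))"

lemma inner_matrix_vector_symmetric:
  "transpose M = M \<Longrightarrow> u \<bullet> (M *v v) = (M *v u) \<bullet> (v :: real^'n::finite)"
  by (metis dot_lmul_matrix transpose_matrix_vector)

lemma positive_semidefinite_rank_one_update:
  fixes M :: "real^'n::finite^'n"
  assumes psd: "positive_semidefinite M" and pos: "0 < u0 \<bullet> (M *v u0)"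
  defines "a \<equiv> u0 \<bullet> (M *v u0)" and "m \<equiv> M *v u0"
  defines "M' \<equiv> M - (1 / a) *\<^sub>R (\<chi> i j. m $ i * m $ j)"
  shows "positive_semidefinite M'"
    and "u \<bullet> (M *v u) = u \<bullet> (M' *v u) + (m \<bullet> u)\<^sup>2 / a"
    and "dim {u. M *v u = 0} < dim {u. M' *v u = 0}"
proof -
  have sym: "transpose M = M" and nonneg: "\<And>u. 0 \<le> u \<bullet> (M *v u)"
    using psd by (auto simp: positive_semidefinite_def)
  have "a > 0"
    using pos by (simp add: a_def)
  have M'_mult: "M' *v v = M *v v - ((m \<bullet> v) / a) *\<^sub>R m" for v
    by (simp add: M'_def vec_eq_iff matrix_vector_mult_def inner_vec_def sum_subtractf
        sum_distrib_left sum_distrib_right sum_divide_distrib field_simps)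
  have m_inner: "m \<bullet> v = u0 \<bullet> (M *v v)" for v
    by (simp add: m_def inner_matrix_vector_symmetric[OF sym])
  show M'_form: "u \<bullet> (M *v u) = u \<bullet> (M' *v u) + (m \<bullet> u)\<^sup>2 / a" for u
    by (simp add: M'_mult inner_diff_right inner_commute[of u m] power2_eq_square)
  have "transpose M' = M'"
    using sym by (simp add: M'_def transpose_def vec_eq_iff mult.commute)
  moreover have "0 \<le> u \<bullet> (M' *v u)" for u
  proof -
    \<comment> \<open>the form restricted to the line through u in direction u0 is least at u - t u0\<close>
    define t where "t = (m \<bullet> u) / a"
    have "0 \<le> (u - t *\<^sub>R u0) \<bullet> (M *v (u - t *\<^sub>R u0))"
      by (rule nonneg)
    also have "\<dots> = u \<bullet> (M *v u) - 2 * t * (m \<bullet> u) + t\<^sup>2 * a"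
      using m_inner[of u] inner_matrix_vector_symmetric[OF sym, of u0 u]
      by (simp add: matrix_vector_mult_diff_distrib inner_diff_left inner_diff_right a_def
          m_def inner_commute power2_eq_square algebra_simps)
    also have "\<dots> = u \<bullet> (M' *v u)"
      using \<open>a > 0\<close> by (simp add: M'_form t_def power2_eq_square field_simps)
    finally show ?thesis .
  qed
  ultimately show "positive_semidefinite M'"
    by (simp add: positive_semidefinite_def)
  have "{u. M *v u = 0} \<subseteq> {u. M' *v u = 0}"
    by (auto simp: M'_mult m_inner)
  moreover have "M' *v u0 = 0"
    using \<open>a > 0\<close> by (simp add: M'_mult a_def m_def inner_commute)
  ultimately have "dim (insert u0 {u. M *v u = 0}) \<le> dim {u. M' *v u = 0}"
    by (intro dim_subset) auto
  moreover have "u0 \<notin> span {u. M *v u = 0}"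
    using pos by (auto simp: span_eq_iff[THEN iffD2, OF linear_subspace_kernel[OF matrix_vector_mul_linear]])
  ultimately show "dim {u. M *v u = 0} < dim {u. M' *v u = 0}"
    by (simp add: dim_insert)
qed

lemma positive_semidefinite_sum_of_squares:
  fixes M :: "real^'n::finite^'n"
  assumes "positive_semidefinite M" and "CARD('n) \<le> dim {u. M *v u = 0} + N"
  shows "\<exists>c :: nat \<Rightarrow> real^'n. \<forall>u. u \<bullet> (M *v u) = (\<Sum>l<N. (c l \<bullet> u)\<^sup>2)"
  using assms
proof (induction N arbitrary: M)
  case 0
  have "dim {u. M *v u = 0} = DIM(real^'n)"
    using "0.prems"(2) dim_subset_UNIV[of "{u. M *v u = 0}"] by simp
  then have "span {u. M *v u = 0} = UNIV"
    using dim_eq_full by blast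
  then have "M *v u = 0" for u
    by (auto simp: span_eq_iff[THEN iffD2, OF linear_subspace_kernel[OF matrix_vector_mul_linear]])
  then show ?case
    by simp
next
  case (Suc N)
  show ?case
  proof (cases "\<exists>u0. 0 < u0 \<bullet> (M *v u0)")
    case True
    then obtain u0 where pos: "0 < u0 \<bullet> (M *v u0)" ..
    define a where "a = u0 \<bullet> (M *v u0)"
    define m where "m = M *v u0"
    define M' where "M' = M - (1 / a) *\<^sub>R (\<chi> i j. m $ i * m $ j)"
    note update = positive_semidefinite_rank_one_update[OF Suc.prems(1) pos, folded a_def m_def, folded M'_def]
    have "CARD('n) \<le> dim {u. M' *v u = 0} + N"
      using update(3) Suc.prems(2) by linarith
    then obtain c where c: "\<forall>u. u \<bullet> (M' *v u) = (\<Sum>l<N. (c l \<bullet> u)\<^sup>2)"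
      using Suc.IH[OF update(1)] by blast
    have "a > 0"
      using pos by (simp add: a_def)
    then have "u \<bullet> (M *v u) = (\<Sum>l<Suc N. ((c(N := (1 / sqrt a) *\<^sub>R m)) l \<bullet> u)\<^sup>2)" for u
      using c by (simp add: update(2) power_divide)
    then show ?thesis
      by blast
  next
    case False
    then have "u \<bullet> (M *v u) = 0" for u
      using Suc.prems(1) by (metis positive_semidefinite_def order_antisym_conv not_le)
    then show ?thesis
      by (intro exI[of _ "\<lambda>_. 0"]) simp
  qed
qed

lemma positive_semidefinite_gram_factorization:
  fixes M :: "real^'v::finite^'v"
  assumes "positive_semidefinite M" and "CARD('v) \<le> dim {u. M *v u = 0} + CARD('n::finite)"
  shows "\<exists>C :: real^'v^'n. \<forall>u. u \<bullet> (M *v u) = (norm (C *v u))\<^sup>2"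
proof -
  obtain c where c: "\<forall>u. u \<bullet> (M *v u) = (\<Sum>l<CARD('n). (c l \<bullet> u)\<^sup>2)"
    using positive_semidefinite_sum_of_squares[OF assms] by blast
  obtain h :: "'n \<Rightarrow> nat" where h: "bij_betw h UNIV {..<CARD('n)}"
    using ex_bij_betw_finite_nat[of "UNIV :: 'n set"] by (auto simp: atLeast0LessThan)
  have "(norm ((\<chi> t. c (h t)) *v u))\<^sup>2 = (\<Sum>l<CARD('n). (c l \<bullet> u)\<^sup>2)" for u
  proof -
    have "(norm ((\<chi> t. c (h t)) *v u))\<^sup>2 = (\<Sum>t\<in>UNIV. (c (h t) \<bullet> u)\<^sup>2)"
      unfolding power2_norm_eq_inner by (simp add: inner_vec_def matrix_vector_mul_component power2_eq_square)
    also have "\<dots> = (\<Sum>l<CARD('n). (c l \<bullet> u)\<^sup>2)"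
      by (rule sum.reindex_bij_betw[OF h])
    finally show ?thesis .
  qed
  with c show ?thesis
    by (intro exI[of _ "\<chi> t. c (h t)"]) simp
qed

section \<open>Points with a prescribed squared distance matrix\<close>

definition centering_matrix :: "real^'v::finite^'v" where
  "centering_matrix = mat 1 - (1 / real CARD('v)) *\<^sub>R (\<chi> i j. 1)"

lemma centering_matrix_mult:
  "centering_matrix *v u = u - ((u \<bullet> ones) / real CARD('v::finite)) *\<^sub>R (ones :: real^'v)"
proof -
  have "(\<chi> i j. 1) *v u = (u \<bullet> ones) *\<^sub>R (ones :: real^'v)"
    unfolding inner_ones by (simp add: vec_eq_iff matrix_vector_mult_def ones_def)
  then show ?thesis
    by (simp add: centering_matrix_def matrix_vector_mult_diff_rdistrib
        scaleR_matrix_vector_assoc[symmetric])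
qed

lemma transpose_centering_matrix: "transpose (centering_matrix :: real^'v::finite^'v) = centering_matrix"
  by (simp add: centering_matrix_def transpose_def vec_eq_iff mat_def eq_commute)

lemma centering_matrix_mult_orth_ones: "u \<bullet> ones = 0 \<Longrightarrow> centering_matrix *v u = u"
  by (simp add: centering_matrix_mult)

lemma centering_matrix_mult_ones: "centering_matrix *v ones = (0 :: real^'v::finite)"
  by (simp add: centering_matrix_mult ones_inner_ones)

lemma inner_centering_matrix_mult_ones: "(centering_matrix *v u) \<bullet> ones = (0 :: real)"
  by (simp add: centering_matrix_mult inner_diff_left ones_inner_ones)

lemma two_le_dim_kernel:
  fixes M :: "real^'v::finite^'v"
  assumes "M *v ones = 0" and "M *v w = 0" and "w \<noteq> 0" and "w \<bullet> ones = 0"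
  shows "2 \<le> dim {u. M *v u = 0}"
proof -
  have "ones \<notin> span {w}"
  proof
    assume "ones \<in> span {w}"
    then obtain t where t: "ones = t *\<^sub>R w"
      by (auto simp: span_singleton)
    have "ones \<bullet> (ones :: real^'v) = t * (w \<bullet> ones)"
      by (simp add: t)
    then show False
      using assms(4) by (simp add: ones_inner_ones)
  qed
  then have "dim {ones, w} = 2"
    using assms(3) by (simp add: dim_insert)
  moreover have "dim {ones, w} \<le> dim {u. M *v u = 0}"
    using assms(1,2) by (intro dim_subset) auto
  ultimately show ?thesis
    by simp
qed

lemma quadratic_form_axis_diff:
  fixes B :: "real^'v::finite^'v"
  assumes "transpose B = B" and "\<And>i. B $ i $ i = 0"
  shows "(axis i 1 - axis j 1) \<bullet> (B *v (axis i 1 - axis j 1)) = - 2 * B $ i $ j"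
proof -
  have entry: "axis p 1 \<bullet> (B *v axis q 1) = B $ p $ q" for p q
    by (simp add: inner_axis' matrix_vector_mult_basis column_def)
  show ?thesis
    using arg_cong[OF assms(1), of "\<lambda>A. A $ i $ j"]
    by (simp add: inner_diff_left inner_diff_right matrix_vector_mult_diff_distrib entry assms(2)
        transpose_def)
qed

lemma ex_points_sq_dist_matrix_eq_neg:
  fixes B :: "real^'v::finite^'v"
  assumes sym: "transpose B = B" and diag: "\<And>i. B $ i $ i = 0"
    and psd: "\<And>w. w \<bullet> ones = 0 \<Longrightarrow> 0 \<le> w \<bullet> (B *v w)"
    and w0: "w0 \<noteq> 0" "w0 \<bullet> ones = 0" "B *v w0 = \<gamma> *\<^sub>R ones"
    and card: "CARD('v) \<le> CARD('n::finite) + 2"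
  shows "\<exists>x :: 'v \<Rightarrow> real^'n. sq_dist_matrix x = - B"
proof -
  define P where "P = (centering_matrix :: real^'v^'v)"
  \<comment> \<open>the Gram matrix of the sought points, translated so that their centroid is 0\<close>
  define M where "M = (1 / 2) *\<^sub>R (P ** B ** P)"
  have M_mult: "M *v u = (1 / 2) *\<^sub>R (P *v (B *v (P *v u)))" for u
    by (simp add: M_def scaleR_matrix_vector_assoc[symmetric] matrix_vector_mul_assoc matrix_mul_assoc)
  have M_form: "u \<bullet> (M *v u) = (1 / 2) * ((P *v u) \<bullet> (B *v (P *v u)))" for u
    using inner_matrix_vector_symmetric[OF transpose_centering_matrix, of u "B *v (P *v u)"]
    by (simp add: M_mult P_def)
  have "transpose M = M"
    by (simp add: M_def P_def transpose_scalar matrix_transpose_mul transpose_centering_matrix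
        sym matrix_mul_assoc)
  moreover have "0 \<le> u \<bullet> (M *v u)" for u
    using psd[OF inner_centering_matrix_mult_ones] by (simp add: M_form P_def)
  ultimately have "positive_semidefinite M"
    by (simp add: positive_semidefinite_def)
  moreover have "M *v ones = 0" "M *v w0 = 0"
    using w0 by (simp_all add: M_mult P_def centering_matrix_mult_ones
        centering_matrix_mult_orth_ones matrix_vector_mult_scaleR)
  then have "CARD('v) \<le> dim {u. M *v u = 0} + CARD('n)"
    using two_le_dim_kernel[of M w0] w0(1,2) card by linarith
  ultimately obtain C :: "real^'v^'n" where C: "\<And>u. u \<bullet> (M *v u) = (norm (C *v u))\<^sup>2"
    using positive_semidefinite_gram_factorization by blast
  define x where "x i = C *v axis i 1" for i
  have "(dist (x i) (x j))\<^sup>2 = - B $ i $ j" for i j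
  proof -
    let ?\<delta> = "axis i 1 - axis j 1 :: real^'v"
    have "?\<delta> \<bullet> ones = 0"
      by (simp add: inner_diff_left inner_axis' ones_def)
    have "(dist (x i) (x j))\<^sup>2 = (norm (C *v ?\<delta>))\<^sup>2"
      by (simp add: x_def dist_norm matrix_vector_mult_diff_distrib)
    also have "\<dots> = (1 / 2) * (?\<delta> \<bullet> (B *v ?\<delta>))"
      using \<open>?\<delta> \<bullet> ones = 0\<close> by (simp add: C[symmetric] M_form P_def centering_matrix_mult_orth_ones)
    also have "\<dots> = - B $ i $ j"
      by (simp add: quadratic_form_axis_diff[OF sym diag])
    finally show ?thesis .
  qed
  then show ?thesis
    by (auto simp: sq_dist_matrix_def vec_eq_iff)
qed

section \<open>Two-distance representations of graphs\<close>

lemma transpose_B_G: "(\<And>i j. E i j \<longleftrightarrow> E j i) \<Longrightarrow> transpose (B_G E k) = B_G E k"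
  by (auto simp: B_G_def transpose_def vec_eq_iff)

lemma B_G_diagonal: "B_G E k $ i $ i = 0"
  by (simp add: B_G_def)

lemma sq_dist_matrix_eq_neg_B_G_iff:
  fixes x :: "'v::finite \<Rightarrow> 'a::real_inner"
  assumes "0 \<le> k"
  shows "sq_dist_matrix x = - B_G E k \<longleftrightarrow>
    (\<forall>i j. i \<noteq> j \<longrightarrow> dist (x i) (x j) = (if E i j then k else 1))"
proof -
  have "sq_dist_matrix x = - B_G E k \<longleftrightarrow>
      (\<forall>i j. i \<noteq> j \<longrightarrow> (dist (x i) (x j))\<^sup>2 = (if E i j then k else 1)\<^sup>2)"
    by (auto simp: sq_dist_matrix_def B_G_def vec_eq_iff)
  also have "\<dots> \<longleftrightarrow> (\<forall>i j. i \<noteq> j \<longrightarrow> dist (x i) (x j) = (if E i j then k else 1))"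
    using assms by (simp add: power2_eq_iff_nonneg)
  finally show ?thesis .
qed

lemma orth_ones_eq_0_if_constant_offdiagonal:
  fixes B :: "real^'v::finite^'v"
  assumes "\<And>i j. i \<noteq> j \<Longrightarrow> B $ i $ j = c" and "\<And>i. B $ i $ i = 0" and "c \<noteq> 0"
    and "w \<bullet> ones = 0" and "B *v w = \<gamma> *\<^sub>R ones"
  shows "w = 0"
proof -
  have sum0: "(\<Sum>j\<in>UNIV. w $ j) = 0"
    using assms(4) by (simp add: inner_ones)
  have "(B *v w) $ i = c * (\<Sum>j\<in>UNIV. w $ j) - c * w $ i" for i
  proof -
    have "(B *v w) $ i = (\<Sum>j\<in>UNIV. c * w $ j - (if j = i then c * w $ j else 0))"
      unfolding matrix_vector_mult_def using assms(1,2) by (auto intro!: sum.cong)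
    then show ?thesis
      by (simp add: sum_subtractf sum_distrib_left)
  qed
  then have Bw: "B *v w = (- c) *\<^sub>R w"
    by (simp add: vec_eq_iff sum0)
  have "\<gamma> * real CARD('v) = 0"
    using arg_cong[OF assms(5), of "\<lambda>v. v \<bullet> ones"] assms(4)
    by (simp add: Bw ones_inner_ones)
  then show ?thesis
    using assms(3,5) by (simp add: Bw)
qed

lemma B_G_edge_and_nonedge:
  assumes "k \<noteq> 0" and "w \<noteq> 0" and "w \<bullet> ones = 0" and "B_G E k *v w = \<gamma> *\<^sub>R ones"
  shows "(\<exists>i j. i \<noteq> j \<and> E i j) \<and> (\<exists>i j. i \<noteq> j \<and> \<not> E i j)"
proof (intro conjI; rule ccontr)
  assume "\<nexists>i j. i \<noteq> j \<and> E i j"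
  then have "B_G E k $ i $ j = -1" if "i \<noteq> j" for i j
    using that by (auto simp: B_G_def)
  then show False
    using orth_ones_eq_0_if_constant_offdiagonal[of _ "-1", OF _ B_G_diagonal _ assms(3,4)] assms(2)
    by simp
next
  assume "\<nexists>i j. i \<noteq> j \<and> \<not> E i j"
  then have "B_G E k $ i $ j = - k\<^sup>2" if "i \<noteq> j" for i j
    using that by (auto simp: B_G_def)
  then show False
    using orth_ones_eq_0_if_constant_offdiagonal[of _ "- k\<^sup>2", OF _ B_G_diagonal _ assms(3,4)] assms(1,2)
    by simp
qed

lemma representable_imp_sq_dist_matrix:
  fixes E :: "'v::finite \<Rightarrow> 'v \<Rightarrow> bool"
  assumes "representable E k TYPE('n::finite)"
  shows "\<exists>x :: 'v \<Rightarrow> real^'n. sq_dist_matrix x = - B_G E k"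
proof -
  obtain S :: "(real^'n) set" and f where S: "two_distance_set S" "distance_ratio S = k"
    and f: "bij_betw f UNIV S" and adj: "\<And>i j. E i j \<longleftrightarrow> assoc_adj S (f i) (f j)"
    using assms unfolding representable_def by blast
  obtain y1 y2 where y: "dists S = {y1, y2}" "y1 \<noteq> y2"
    using S(1) unfolding two_distance_set_def card_2_iff by blast
  define a b where "a = min y1 y2" and "b = max y1 y2"
  have ab: "dists S = {a, b}" "a < b"
    using y by (auto simp: a_def b_def min_def max_def insert_commute)
  then have Max: "Max (dists S) = b" and Min: "Min (dists S) = a"
    by auto
  have "a \<in> dists S"
    using ab(1) by simp
  then have "a > 0"
    unfolding dists_def by auto
  have f_dist: "dist (f i) (f j) = (if E i j then b else a)" if "i \<noteq> j" for i j
  proof -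
    have "f i \<in> S" "f j \<in> S" "f i \<noteq> f j"
      using f that by (auto simp: bij_betw_def inj_eq)
    then have "dist (f i) (f j) \<in> {a, b}"
      unfolding ab(1)[symmetric] dists_def by blast
    then show ?thesis
      using adj[of i j] \<open>f i \<noteq> f j\<close> \<open>f i \<in> S\<close> \<open>f j \<in> S\<close> ab(2)
      by (auto simp: assoc_adj_def Max)
  qed
  define x where "x i = (1 / a) *\<^sub>R f i" for i
  have "dist (x i) (x j) = dist (f i) (f j) / a" for i j
    using \<open>a > 0\<close> by (simp add: x_def dist_norm divide_inverse_commute flip: scaleR_diff_right)
  then have "dist (x i) (x j) = (if E i j then k else 1)" if "i \<noteq> j" for i j
    using f_dist[OF that] \<open>a > 0\<close> S(2) by (simp add: distance_ratio_def Max Min)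
  moreover have "0 \<le> k"
  proof -
    have "k = b / a"
      using S(2) by (simp add: distance_ratio_def Max Min)
    then show ?thesis
      using \<open>a > 0\<close> ab(2) by simp
  qed
  ultimately have "sq_dist_matrix x = - B_G E k"
    by (simp add: sq_dist_matrix_eq_neg_B_G_iff)
  then show ?thesis
    by blast
qed

lemma representable_if_sq_dist_matrix:
  fixes x :: "'v::finite \<Rightarrow> real^'n::finite"
  assumes k: "1 < k" and irrefl: "\<And>i. \<not> E i i" and D: "sq_dist_matrix x = - B_G E k"
    and edge: "\<exists>i j. i \<noteq> j \<and> E i j" and nonedge: "\<exists>i j. i \<noteq> j \<and> \<not> E i j"
  shows "representable E k TYPE('n)"
proof -
  have x_dist: "dist (x i) (x j) = (if E i j then k else 1)" if "i \<noteq> j" for i j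
    using D k that by (simp add: sq_dist_matrix_eq_neg_B_G_iff)
  have "inj x"
  proof (rule injI, rule ccontr)
    fix i j
    assume "x i = x j" "i \<noteq> j"
    then show False
      using x_dist[of i j] k by (simp split: if_splits)
  qed
  define S where "S = range x"
  have dist_in_dists: "dist (x i) (x j) \<in> dists S" if "i \<noteq> j" for i j
  proof -
    have "x i \<noteq> x j"
      using that \<open>inj x\<close> by (simp add: inj_eq)
    then show ?thesis
      unfolding dists_def S_def by blast
  qed
  have "dists S = {1, k}"
  proof
    show "dists S \<subseteq> {1, k}"
    proof
      fix d
      assume "d \<in> dists S"
      then obtain i j where "d = dist (x i) (x j)" "i \<noteq> j"
        by (auto simp: dists_def S_def)
      then show "d \<in> {1, k}"
        using x_dist by simp
    qed
    obtain i j where "i \<noteq> j" "E i j"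
      using edge by blast
    moreover obtain i' j' where "i' \<noteq> j'" "\<not> E i' j'"
      using nonedge by blast
    ultimately show "{1, k} \<subseteq> dists S"
      using dist_in_dists x_dist by (metis empty_subsetI insert_subset)
  qed
  then have Max: "Max (dists S) = k" and Min: "Min (dists S) = 1"
    using k by auto
  have "two_distance_set S" "distance_ratio S = k"
    using \<open>dists S = {1, k}\<close> k by (simp_all add: two_distance_set_def distance_ratio_def Max Min S_def)
  moreover have "bij_betw x UNIV S"
    using \<open>inj x\<close> by (simp add: S_def bij_betw_imageI)
  moreover have "\<forall>i j. E i j \<longleftrightarrow> assoc_adj S (x i) (x j)"
  proof (intro allI)
    fix i j
    show "E i j \<longleftrightarrow> assoc_adj S (x i) (x j)"
    proof (cases "i = j")
      case True
      then show ?thesis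
        using irrefl by (simp add: assoc_adj_def)
    next
      case False
      have "x i \<noteq> x j" "x i \<in> S" "x j \<in> S"
        using \<open>inj x\<close> False by (simp_all add: inj_eq S_def)
      then show ?thesis
        using x_dist[OF False] k by (simp add: assoc_adj_def Max)
    qed
  qed
  ultimately show ?thesis
    unfolding representable_def by blast
qed

theorem proposition3p2:
  fixes E :: "'v::finite \<Rightarrow> 'v \<Rightarrow> bool" and k :: real
  assumes "CARD('v) = CARD('n::finite) + 2"
    and "\<And>i j. E i j \<longleftrightarrow> E j i"
    and "\<And>i. \<not> E i i"
    and "k > 1"
  shows "representable E k TYPE('n) \<longleftrightarrow>
           ((\<forall>w::real^'v. w \<bullet> ones = 0 \<longrightarrow> w \<bullet> (B_G E k *v w) \<ge> 0) \<and>
            (\<exists>(w::real^'v) (\<gamma>::real). w \<noteq> 0 \<and> w \<bullet> ones = 0 \<and> B_G E k *v w = \<gamma> *\<^sub>R ones))"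
proof
  assume "representable E k TYPE('n)"
  then obtain x :: "'v \<Rightarrow> real^'n" where "B_G E k = - sq_dist_matrix x"
    using representable_imp_sq_dist_matrix by (metis minus_minus)
  then show "(\<forall>w::real^'v. w \<bullet> ones = 0 \<longrightarrow> w \<bullet> (B_G E k *v w) \<ge> 0) \<and>
      (\<exists>(w::real^'v) \<gamma>. w \<noteq> 0 \<and> w \<bullet> ones = 0 \<and> B_G E k *v w = \<gamma> *\<^sub>R ones)"
    using ex_orth_ones_neg_sq_dist_matrix_mult_eq_const[of x] assms(1)
    by (simp add: quadratic_form_neg_sq_dist_matrix_nonneg)
next
  assume "(\<forall>w::real^'v. w \<bullet> ones = 0 \<longrightarrow> w \<bullet> (B_G E k *v w) \<ge> 0) \<and>
      (\<exists>(w::real^'v) \<gamma>. w \<noteq> 0 \<and> w \<bullet> ones = 0 \<and> B_G E k *v w = \<gamma> *\<^sub>R ones)"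
  then obtain w :: "real^'v" and \<gamma> where psd: "\<And>u. u \<bullet> ones = 0 \<Longrightarrow> 0 \<le> u \<bullet> (B_G E k *v u)"
    and w: "w \<noteq> 0" "w \<bullet> ones = 0" "B_G E k *v w = \<gamma> *\<^sub>R ones"
    by blast
  obtain x :: "'v \<Rightarrow> real^'n" where "sq_dist_matrix x = - B_G E k"
    using ex_points_sq_dist_matrix_eq_neg[OF transpose_B_G B_G_diagonal psd w] assms(1,2) by auto
  moreover have "(\<exists>i j. i \<noteq> j \<and> E i j) \<and> (\<exists>i j. i \<noteq> j \<and> \<not> E i j)"
    using B_G_edge_and_nonedge[OF _ w] assms(4) by simp
  ultimately show "representable E k TYPE('n)"
    using representable_if_sq_dist_matrix assms(3,4) by blast
qed

end
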